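(* Write $Q:=3^\ell$ with $\ell\ge 5$. Let $n_1,n_2,n_5,n_9$ be nonnegative integers for which $n_1+2n_2+5n_5+9n_9=Q-1$ and the union of the base-$3$ expansions of the $n_j$'s consists of one copy of each $3^i$ with $0\le i\le \ell-2$ and $i\ne 2$, along with either one copy of $2\cdot 9$ or two copies of $9$. Then the base-$3$ expansion of $n_5$ contains $Q/9$, and if $\ell\ge 6$ then the base-$3$ expansion of $n_9$ contains $Q/27$.
   Context: A term of the base-$p$ expansion of a nonnegative integer $m=\sum_j b_jp^j$ (with $0\le b_j\le p-1$) is some $b_jp^j$ with $b_j>0$. The union of the base-$p$ expansions of several integers means the multiset of all terms of all these integers. *)

theory Defs
  imports Main "HOL-Library.Multiset"
begin

definition digit :: "nat \<Rightarrow> nat \<Rightarrow> nat \<Rightarrow> nat" where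
  "digit p m j = m div p ^ j mod p"

text \<open>The multiset of terms b_j p^j (b_j > 0) of the base-p expansion of m.
  Positions j \<le> m suffice since p^j > m for j > m when p \<ge> 2.\<close>
definition base_terms :: "nat \<Rightarrow> nat \<Rightarrow> nat multiset" where
  "base_terms p m =
     image_mset (\<lambda>j. digit p m j * p ^ j)
       (filter_mset (\<lambda>j. digit p m j > 0) (mset_set {..m}))"

end

theory Submission
  imports Defs
begin

text \<open>Write W i = d_i(n1) + 2 d_i(n2) + 5 d_i(n5) + 9 d_i(n9) for the weighted sum of the
  i-th base-3 digits. Comparing the two multisets of terms position by position gives
  W i \<in> {1, 2, 5, 9} for i \<le> l - 2, i \<noteq> 2 (exactly one n_j has a nonzero digit there,
  and it is 1), W 2 \<in> {2, 3, 4, 6, 7, 10, 11, 14, 18} (one digit 2 or two digits 1), and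
  W i = 0 above l - 2. Since the W i 3^i sum to 3^l - 1, adding up the columns from the bottom
  produces carries c k = (W 0 + ... + W (k-1) 3^(k-1) + 1) / 3^k with c 0 = 1, c l = 1 and
  3 c (k+1) = c k + W k. From column 3 on the carries stay between 1 and 5. At the top
  c (l-1) = 3, so c (l-2) + W (l-2) = 9, which forces W (l-2) = 5, a digit 1 of n5; then
  c (l-3) + W (l-3) = 12 forces W (l-3) = 9, a digit 1 of n9.\<close>

lemma digit_less: "0 < p \<Longrightarrow> digit p m j < p"
  by (simp add: digit_def)

lemma sum_digits_eq_mod: "(\<Sum>i<k. digit p n i * p ^ i) = n mod p ^ k"
proof (induction k)
  case (Suc k)
  have "n mod p ^ Suc k = p ^ k * digit p n k + n mod p ^ k"
    unfolding power_Suc2 digit_def by (rule mod_mult2_eq)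
  with Suc show ?case by simp
qed simp

lemma sum_digits_eq: "n < p ^ k \<Longrightarrow> (\<Sum>i<k. digit p n i * p ^ i) = n"
  by (simp add: sum_digits_eq_mod)

lemma digit_times_power_eq_iff:
  fixes p d e i j :: nat
  assumes "0 < d" "d < p" "0 < e" "e < p"
  shows "d * p ^ i = e * p ^ j \<longleftrightarrow> d = e \<and> i = j"
proof -
  have no_shift: "d' * p ^ i' \<noteq> e' * p ^ j'"
    if "i' < j'" "d' < p" "0 < e'" for d' e' i' j' :: nat
  proof
    assume "d' * p ^ i' = e' * p ^ j'"
    also have "\<dots> = (e' * p ^ (j' - i')) * p ^ i'"
      using \<open>i' < j'\<close> by (simp flip: power_add)
    finally have "d' = e' * p ^ (j' - i')"
      using \<open>d' < p\<close> by (cases "p = 0") auto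
    moreover have "p \<le> e' * p ^ (j' - i')"
    proof -
      have "p ^ 1 \<le> p ^ (j' - i')"
        using \<open>i' < j'\<close> \<open>d' < p\<close> by (intro power_increasing) auto
      also have "\<dots> \<le> e' * p ^ (j' - i')"
        using \<open>0 < e'\<close> by simp
      finally show ?thesis by simp
    qed
    ultimately show False using \<open>d' < p\<close> by simp
  qed
  show ?thesis
    using no_shift[of i j d e] no_shift[of j i e d] assms
    by (cases i j rule: linorder_cases) auto
qed

lemma digit_pos_imp_le:
  assumes "1 < p" "0 < digit p m i"
  shows "i \<le> m"
proof -
  have "0 < m div p ^ i"
    using assms(2) by (auto simp: digit_def intro: gr0I)
  then have "p ^ i \<le> m"
    using assms(1) by (simp add: div_greater_zero_iff)
  moreover have "i < p ^ i"
    using assms(1) by (simp add: power_gt_expt)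
  ultimately show ?thesis by simp
qed

lemma count_base_terms:
  assumes "0 < d" "d < p"
  shows "count (base_terms p m) (d * p ^ i) = of_bool (digit p m i = d)"
proof -
  define J where "J = {j. j \<le> m \<and> 0 < digit p m j}"
  have unique: "digit p m j * p ^ j = d * p ^ i \<longleftrightarrow> digit p m j = d \<and> j = i"
    if "j \<in> J" for j
    using that assms digit_less[of p m j] by (auto simp: J_def digit_times_power_eq_iff)
  have "inj_on (\<lambda>j. digit p m j * p ^ j) J"
    using assms digit_less[of p] by (intro inj_onI) (auto simp: J_def digit_times_power_eq_iff)
  then have "base_terms p m = mset_set ((\<lambda>j. digit p m j * p ^ j) ` J)"
    by (simp add: base_terms_def J_def image_mset_mset_set)
  moreover have "d * p ^ i \<in> (\<lambda>j. digit p m j * p ^ j) ` J \<longleftrightarrow> digit p m i = d"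
    using unique assms digit_pos_imp_le[of p m i] by (force simp: J_def)
  moreover have "finite J"
    by (simp add: J_def)
  ultimately show ?thesis
    by (simp add: count_mset_set')
qed

lemma power_in_base_terms_iff: "1 < p \<Longrightarrow> p ^ i \<in># base_terms p m \<longleftrightarrow> digit p m i = 1"
  using count_base_terms[of 1 p m i] by (simp add: count_greater_zero_iff[symmetric])

lemma count_image_power_mset_set:
  fixes p d k :: nat
  assumes "finite S" "0 < d" "d < p"
  shows "count (image_mset (\<lambda>i. p ^ i) (mset_set S)) (d * p ^ k) = of_bool (d = 1 \<and> k \<in> S)"
proof -
  have power_eq_iff: "p ^ i = d * p ^ k \<longleftrightarrow> d = 1 \<and> i = k" for i
    using digit_times_power_eq_iff[of 1 p d i k] assms by auto
  have "inj_on (\<lambda>i. p ^ i) S"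
    using assms by (intro inj_onI) simp
  moreover have "d * p ^ k \<in> (\<lambda>i. p ^ i) ` S \<longleftrightarrow> d = 1 \<and> k \<in> S"
    using power_eq_iff by (metis image_iff)
  ultimately show ?thesis
    using assms(1) by (simp add: image_mset_mset_set count_mset_set')
qed

lemma carries_of_sum_eq_power_minus_one:
  fixes W :: "nat \<Rightarrow> nat" and b l :: nat
  assumes expansion: "(\<Sum>i<l. W i * b ^ i) = b ^ l - 1" and b_pos: "0 < b"
  obtains c where "c 0 = 1" "c l = 1" "\<And>k. k < l \<Longrightarrow> b * c (Suc k) = c k + W k"
proof -
  define R where "R k = (\<Sum>i<k. W i * b ^ i)" for k
  have R_Suc: "R (Suc k) = R k + W k * b ^ k" for k
    by (simp add: R_def)
  have dvd: "b ^ k dvd R k + 1" if "k \<le> l" for k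
  proof -
    define T where "T = (\<Sum>i\<in>{k..<l}. W i * b ^ i)"
    have "T + (R k + 1) = R l + 1"
      using that sum.atLeastLessThan_concat[of 0 k l "\<lambda>i. W i * b ^ i"]
      by (simp add: T_def R_def atLeast0LessThan)
    also have "\<dots> = b ^ l"
      using expansion b_pos by (simp add: R_def)
    finally have "b ^ k dvd T + (R k + 1)"
      using that by (simp add: le_imp_power_dvd)
    moreover have "b ^ k dvd T"
      unfolding T_def by (intro dvd_sum) (simp add: le_imp_power_dvd)
    ultimately show ?thesis
      by (simp only: dvd_add_right_iff)
  qed
  define c where "c k = (R k + 1) div b ^ k" for k
  have c_times: "c k * b ^ k = R k + 1" if "k \<le> l" for k
    using dvd[OF that] by (simp add: c_def)
  show thesis
  proof
    show "c 0 = 1"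
      by (simp add: c_def R_def)
    show "c l = 1"
      using expansion b_pos by (simp add: c_def R_def)
    show "b * c (Suc k) = c k + W k" if "k < l" for k
    proof -
      have "(b * c (Suc k)) * b ^ k = c (Suc k) * b ^ Suc k"
        by simp
      also have "\<dots> = (c k + W k) * b ^ k"
        using c_times[of "Suc k"] c_times[of k] that by (simp add: R_Suc algebra_simps)
      finally show ?thesis
        using b_pos by simp
    qed
  qed
qed

lemma times_3_eq_iff: "3 * y = (z::nat) \<longleftrightarrow> z mod 3 = 0 \<and> y = z div 3"
  by auto

lemma top_weights_of_carries:
  fixes W c :: "nat \<Rightarrow> nat" and l :: nat
  assumes "5 \<le> l" and c_0: "c 0 = 1" and c_l: "c l = 1"
    and carry: "\<And>k. k < l \<Longrightarrow> 3 * c (Suc k) = c k + W k"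
    and single: "\<And>i. i \<le> l - 2 \<Longrightarrow> i \<noteq> 2 \<Longrightarrow> W i \<in> {1, 2, 5, 9}"
    and double: "W 2 \<in> {2, 3, 4, 6, 7, 10, 11, 14, 18}"
    and above_top: "W (l - 1) = 0"
  shows "W (l - 2) = 5" and "6 \<le> l \<Longrightarrow> W (l - 3) = 9"
proof -
  have low_carry: "y \<in> {1, 2}" if "3 * y = x + w" "x \<in> {1, 2}" "w \<in> {1, 2, 5, 9}" for x y w :: nat
    using that unfolding times_3_eq_iff by (elim insertE emptyE) simp_all
  have carry_0: "3 * c 1 = c 0 + W 0" and carry_1: "3 * c 2 = c 1 + W 1"
    and carry_2: "3 * c 3 = c 2 + W 2"
    using carry[of 0] carry[of 1] carry[of 2] assms(1) by (simp_all add: eval_nat_numeral)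
  have "W 0 \<in> {1, 2, 5, 9}" "W 1 \<in> {1, 2, 5, 9}"
    using single[of 0] single[of 1] assms(1) by simp_all
  then have "c 2 \<in> {1, 2}"
    using low_carry[OF carry_0] low_carry[OF carry_1] c_0 by simp
  then have c3: "0 < c 3 \<and> c 3 \<le> 5"
    using carry_2 double unfolding times_3_eq_iff by (elim insertE emptyE) simp_all
  have bounded: "0 < c k \<and> c k \<le> 5" if "3 \<le> k" "k \<le> l - 2" for k
    using that
  proof (induction k rule: dec_induct)
    case base
    show ?case using c3 .
  next
    case (step k)
    then have "3 * c (Suc k) = c k + W k" "W k \<in> {1, 2, 5, 9}" "0 < c k \<and> c k \<le> 5"
      using carry[of k] single[of k] by auto
    then show ?case
      by auto
  qed
  have "c (l - 1) = 3"
    using carry[of "l - 1"] assms(1) c_l above_top by (simp add: Suc_diff_Suc)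
  then have top: "c (l - 2) + W (l - 2) = 9"
    using carry[of "l - 2"] assms(1) by (simp add: Suc_diff_Suc numeral_2_eq_2)
  moreover have "0 < c (l - 2) \<and> c (l - 2) \<le> 5" "W (l - 2) \<in> {1, 2, 5, 9}"
    using bounded[of "l - 2"] single[of "l - 2"] assms(1) by simp_all
  ultimately show "W (l - 2) = 5"
    by auto
  show "W (l - 3) = 9" if "6 \<le> l"
  proof -
    have "c (l - 3) + W (l - 3) = 12"
      using top \<open>W (l - 2) = 5\<close> carry[of "l - 3"] assms(1)
      by (simp add: Suc_diff_Suc numeral_3_eq_3 numeral_2_eq_2)
    moreover have "0 < c (l - 3) \<and> c (l - 3) \<le> 5" "W (l - 3) \<in> {1, 2, 5, 9}"
      using bounded[of "l - 3"] single[of "l - 3"] that by simp_all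
    ultimately show ?thesis
      by auto
  qed
qed

lemma nat_less_3_iff: "x < 3 \<longleftrightarrow> x = 0 \<or> x = 1 \<or> x = (2::nat)"
  by auto

lemma weighted_digits_single_one:
  fixes a b c e :: nat
  assumes "a < 3" "b < 3" "c < 3" "e < 3"
    and "of_bool (a = 1) + of_bool (b = 1) + of_bool (c = 1) + of_bool (e = 1) = (1::nat)"
    and "of_bool (a = 2) + of_bool (b = 2) + of_bool (c = 2) + of_bool (e = 2) = (0::nat)"
  shows "a + 2 * b + 5 * c + 9 * e \<in> {1, 2, 5, 9}
    \<and> (a + 2 * b + 5 * c + 9 * e = 5 \<longrightarrow> c = 1) \<and> (a + 2 * b + 5 * c + 9 * e = 9 \<longrightarrow> e = 1)"
  using assms unfolding nat_less_3_iff by (elim disjE) simp_all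

lemma weighted_digits_double:
  fixes a b c e :: nat
  assumes "a < 3" "b < 3" "c < 3" "e < 3"
    and "of_bool (a = 1) + of_bool (b = 1) + of_bool (c = 1) + of_bool (e = 1) = (ones::nat)"
    and "of_bool (a = 2) + of_bool (b = 2) + of_bool (c = 2) + of_bool (e = 2) = (twos::nat)"
    and "ones = 0 \<and> twos = 1 \<or> ones = 2 \<and> twos = 0"
  shows "a + 2 * b + 5 * c + 9 * e \<in> {2, 3, 4, 6, 7, 10, 11, 14, 18}"
  using assms unfolding nat_less_3_iff by (elim disjE) simp_all

definition weighted_digit_sum :: "nat \<Rightarrow> nat \<Rightarrow> nat \<Rightarrow> nat \<Rightarrow> nat \<Rightarrow> nat" where
  "weighted_digit_sum n1 n2 n5 n9 i =
     digit 3 n1 i + 2 * digit 3 n2 i + 5 * digit 3 n5 i + 9 * digit 3 n9 i"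

lemma sum_weighted_digit_sum:
  assumes "n1 < 3 ^ l" "n2 < 3 ^ l" "n5 < 3 ^ l" "n9 < 3 ^ l"
  shows "(\<Sum>i<l. weighted_digit_sum n1 n2 n5 n9 i * 3 ^ i) = n1 + 2 * n2 + 5 * n5 + 9 * n9"
proof -
  have "(\<Sum>i<l. weighted_digit_sum n1 n2 n5 n9 i * 3 ^ i) =
      (\<Sum>i<l. digit 3 n1 i * 3 ^ i) + 2 * (\<Sum>i<l. digit 3 n2 i * 3 ^ i)
      + 5 * (\<Sum>i<l. digit 3 n5 i * 3 ^ i) + 9 * (\<Sum>i<l. digit 3 n9 i * 3 ^ i)"
    by (simp add: weighted_digit_sum_def sum.distrib sum_distrib_left algebra_simps)
  also have "\<dots> = n1 + 2 * n2 + 5 * n5 + 9 * n9"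
    using assms by (simp add: sum_digits_eq)
  finally show ?thesis .
qed

lemma weighted_digit_sum_profile:
  fixes n1 n2 n5 n9 k :: nat and X :: "nat multiset"
  assumes terms: "base_terms 3 n1 + base_terms 3 n2 + base_terms 3 n5 + base_terms 3 n9
      = image_mset (\<lambda>i. 3 ^ i) (mset_set {i. i \<le> k \<and> i \<noteq> 2}) + X"
    and X: "X = {#2 * 9#} \<or> X = {#9, 9#}"
  shows "\<And>i. i \<le> k \<Longrightarrow> i \<noteq> 2 \<Longrightarrow> weighted_digit_sum n1 n2 n5 n9 i \<in> {1, 2, 5, 9}
      \<and> (weighted_digit_sum n1 n2 n5 n9 i = 5 \<longrightarrow> digit 3 n5 i = 1)
      \<and> (weighted_digit_sum n1 n2 n5 n9 i = 9 \<longrightarrow> digit 3 n9 i = 1)"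
    and "\<And>i. k < i \<Longrightarrow> i \<noteq> 2 \<Longrightarrow> weighted_digit_sum n1 n2 n5 n9 i = 0"
    and "weighted_digit_sum n1 n2 n5 n9 2 \<in> {2, 3, 4, 6, 7, 10, 11, 14, 18}"
proof -
  define M where "M = base_terms 3 n1 + base_terms 3 n2 + base_terms 3 n5 + base_terms 3 n9"
  define T where "T = image_mset (\<lambda>i. (3::nat) ^ i) (mset_set {i. i \<le> k \<and> i \<noteq> 2})"
  have ones: "count M (3 ^ i) = of_bool (digit 3 n1 i = 1) + of_bool (digit 3 n2 i = 1)
      + of_bool (digit 3 n5 i = 1) + of_bool (digit 3 n9 i = 1)" for i
    using count_base_terms[of 1 3] by (simp add: M_def)
  have twos: "count M (2 * 3 ^ i) = of_bool (digit 3 n1 i = 2) + of_bool (digit 3 n2 i = 2)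
      + of_bool (digit 3 n5 i = 2) + of_bool (digit 3 n9 i = 2)" for i
    using count_base_terms[of 2 3] by (simp add: M_def)
  have T_ones: "count T (3 ^ i) = of_bool (i \<le> k \<and> i \<noteq> 2)" for i
    using count_image_power_mset_set[of _ 1 3] by (simp add: T_def)
  have T_twos: "count T (2 * 3 ^ i) = 0" for i
    using count_image_power_mset_set[of _ 2 3] by (simp add: T_def)
  have "(3::nat) ^ i \<noteq> 2 * 3 ^ 2" "(3::nat) ^ i = 3 ^ 2 \<longleftrightarrow> i = 2"
    "(2::nat) * 3 ^ i \<noteq> 3 ^ 2" "(2::nat) * 3 ^ i = 2 * 3 ^ 2 \<longleftrightarrow> i = 2" for i
    using digit_times_power_eq_iff[of 1 3 2 i 2] digit_times_power_eq_iff[of 1 3 1 i 2]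
      digit_times_power_eq_iff[of 2 3 1 i 2] digit_times_power_eq_iff[of 2 3 2 i 2] by simp_all
  then have X_off: "count X (3 ^ i) = 0 \<and> count X (2 * 3 ^ i) = 0" if "i \<noteq> 2" for i
    using X that by auto
  have X_at_2: "count X (3 ^ 2) = 0 \<and> count X (2 * 3 ^ 2) = 1 \<or> count X (3 ^ 2) = 2 \<and> count X (2 * 3 ^ 2) = 0"
    using X by auto
  have digits: "digit 3 n i < 3" for n i
    by (simp add: digit_less)
  have M_eq: "M = T + X"
    using terms by (simp add: M_def T_def)
  show "weighted_digit_sum n1 n2 n5 n9 i \<in> {1, 2, 5, 9}
      \<and> (weighted_digit_sum n1 n2 n5 n9 i = 5 \<longrightarrow> digit 3 n5 i = 1)
      \<and> (weighted_digit_sum n1 n2 n5 n9 i = 9 \<longrightarrow> digit 3 n9 i = 1)" if "i \<le> k" "i \<noteq> 2" for i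
  proof -
    have "count M (3 ^ i) = 1" "count M (2 * 3 ^ i) = 0"
      using T_ones[of i] T_twos[of i] X_off[of i] that by (simp_all add: M_eq)
    then have "of_bool (digit 3 n1 i = 1) + of_bool (digit 3 n2 i = 1)
        + of_bool (digit 3 n5 i = 1) + of_bool (digit 3 n9 i = 1) = (1::nat)"
      "of_bool (digit 3 n1 i = 2) + of_bool (digit 3 n2 i = 2)
        + of_bool (digit 3 n5 i = 2) + of_bool (digit 3 n9 i = 2) = (0::nat)"
      using ones[of i] twos[of i] by linarith+
    then show ?thesis
      unfolding weighted_digit_sum_def by (rule weighted_digits_single_one[OF digits digits digits digits])
  qed
  show "weighted_digit_sum n1 n2 n5 n9 i = 0" if "k < i" "i \<noteq> 2" for i
    using digits[of n1 i] digits[of n2 i] digits[of n5 i] digits[of n9 i]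
      ones[of i] twos[of i] T_ones[of i] T_twos[of i] X_off[of i] that
    by (auto simp: M_eq weighted_digit_sum_def nat_less_3_iff)
  show "weighted_digit_sum n1 n2 n5 n9 2 \<in> {2, 3, 4, 6, 7, 10, 11, 14, 18}"
    using weighted_digits_double[OF digits digits digits digits ones[of 2, symmetric] twos[of 2, symmetric]]
      T_ones[of 2] T_twos[of 2] X_at_2
    by (simp add: M_eq weighted_digit_sum_def)
qed

theorem lemma4p2:
  fixes l n1 n2 n5 n9 :: nat
  assumes "l \<ge> 5"
    and "n1 + 2 * n2 + 5 * n5 + 9 * n9 = 3 ^ l - 1"
    and "base_terms 3 n1 + base_terms 3 n2 + base_terms 3 n5 + base_terms 3 n9
           = image_mset (\<lambda>i. 3 ^ i) (mset_set {i. i \<le> l - 2 \<and> i \<noteq> 2}) + {#2 * 9#}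
       \<or> base_terms 3 n1 + base_terms 3 n2 + base_terms 3 n5 + base_terms 3 n9
           = image_mset (\<lambda>i. 3 ^ i) (mset_set {i. i \<le> l - 2 \<and> i \<noteq> 2}) + {#9, 9#}"
  shows "3 ^ l div 9 \<in># base_terms 3 n5
         \<and> (l \<ge> 6 \<longrightarrow> 3 ^ l div 27 \<in># base_terms 3 n9)"
proof -
  let ?W = "weighted_digit_sum n1 n2 n5 n9"
  obtain X where terms: "base_terms 3 n1 + base_terms 3 n2 + base_terms 3 n5 + base_terms 3 n9
      = image_mset (\<lambda>i. 3 ^ i) (mset_set {i. i \<le> l - 2 \<and> i \<noteq> 2}) + X"
    and X: "X = {#2 * 9#} \<or> X = {#9, 9#}"
    using assms(3) by blast
  note profile = weighted_digit_sum_profile[OF terms X]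
  have "(0::nat) < 3 ^ l"
    by simp
  then have "n1 < 3 ^ l" "n2 < 3 ^ l" "n5 < 3 ^ l" "n9 < 3 ^ l"
    using assms(2) by linarith+
  then have "(\<Sum>i<l. ?W i * 3 ^ i) = 3 ^ l - 1"
    using assms(2) by (simp add: sum_weighted_digit_sum)
  then obtain c where "c 0 = 1" "c l = 1" "\<And>k. k < l \<Longrightarrow> 3 * c (Suc k) = c k + ?W k"
    by (rule carries_of_sum_eq_power_minus_one) auto
  then have "?W (l - 2) = 5" "6 \<le> l \<Longrightarrow> ?W (l - 3) = 9"
    using top_weights_of_carries[of l c ?W] assms(1) profile(1) profile(2)[of "l - 1"] profile(3)
    by simp_all
  then have "digit 3 n5 (l - 2) = 1" "6 \<le> l \<Longrightarrow> digit 3 n9 (l - 3) = 1"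
    using profile(1) assms(1) by auto
  moreover have "(3::nat) ^ l div 9 = 3 ^ (l - 2)" "(3::nat) ^ l div 27 = 3 ^ (l - 3)"
    using assms(1) by (simp_all add: power_diff)
  ultimately show ?thesis
    by (simp add: power_in_base_terms_iff)
qed

end
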